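(* Let $X$ be a finite connected poset of length $1$ which does not contain a weak crown. Then $\mathcal{AM}(X)=\mathcal{P}(X)$ if and only if $|\mathrm{Min}(X)|=1$ or $|\mathrm{Max}(X)|=1$.
   Context: The length of $X$ is the maximum of $|C|-1$ over chains $C\subseteq X$. A weak $n$-crown ($n\ge2$) is a poset with $2n$ distinct elements $x_1,\dots,x_n,y_1,\dots,y_n$ such that $x_i<y_i$ for $1\le i\le n$, $x_{i+1}<y_i$ for $1\le i\le n-1$, and $x_1<y_n$ (other comparabilities may exist); $X$ contains a weak crown if some subset of $X$ with the induced order is a weak $n$-crown for some $n\ge2$. For $x<y$, $e_{xy}$ denotes the corresponding incidence-algebra basis element and $B=\{e_{xy}:x<y\}$. $\mathcal{C}(X)$ is the set of maximal chains. For a bijection $\theta:B\to B$ and $C:u_1<\dots<u_m$ in $\mathcal{C}(X)$, $\theta$ is increasing on $C$ if there is $D:v_1<\dots<v_m$ in $\mathcal{C}(X)$ with $\theta(e_{u_iu_j})=e_{v_iv_j}$ for all $i<j$, decreasing if $\theta(e_{u_iu_j})=e_{v_{m-j+1}v_{m-i+1}}$ for all $i<j$. $\mathcal{M}(X)$: bijections $B\to B$ increasing or decreasing on every maximal chain. A walk is a sequence $u_0,\dots,u_m$ where for each $i$ one of $u_i,u_{i+1}$ covers the other; closed if $u_0=u_m$. For a closed walk $\Gamma:u_0,\dots,u_m=u_0$ and $z\in X$: $s^+_{\theta,\Gamma}(z)=|\{i: u_i<u_{i+1},\ \exists w>z,\ \theta(e_{zw})=e_{u_iu_{i+1}}\}|$,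 $s^-_{\theta,\Gamma}(z)=|\{i: u_i>u_{i+1},\ \exists w>z,\ \theta(e_{zw})=e_{u_{i+1}u_i}\}|$, $t^+_{\theta,\Gamma}(z)=|\{i: u_i<u_{i+1},\ \exists w<z,\ \theta(e_{wz})=e_{u_iu_{i+1}}\}|$, $t^-_{\theta,\Gamma}(z)=|\{i: u_i>u_{i+1},\ \exists w<z,\ \theta(e_{wz})=e_{u_{i+1}u_i}\}|$, $0\le i\le m-1$. $\theta$ is admissible if $s^+_{\theta,\Gamma}(z)-s^-_{\theta,\Gamma}(z)=t^+_{\theta,\Gamma}(z)-t^-_{\theta,\Gamma}(z)$ for all closed walks $\Gamma$ and all $z$; $\mathcal{AM}(X)$ is the set of admissible elements of $\mathcal{M}(X)$. A bijection $\theta:B\to B$ is proper if there is an automorphism $\lambda$ of $X$ with $\theta(e_{xy})=e_{\lambda(x)\lambda(y)}$ for all $x<y$, or an anti-automorphism $\lambda$ of $X$ with $\theta(e_{xy})=e_{\lambda(y)\lambda(x)}$ for all $x<y$; $\mathcal{P}(X)$ is the set of proper bijections. *)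

theory Defs
  imports Main
begin

text \<open>A finite poset is modelled as a carrier set X of some ordered type,
with the induced order. The basis element e_xy (x<y) is the pair (x,y).\<close>

definition po_chain :: "'a::order set \<Rightarrow> 'a set \<Rightarrow> bool" where
  "po_chain X C \<longleftrightarrow> C \<subseteq> X \<and> (\<forall>x\<in>C. \<forall>y\<in>C. x \<le> y \<or> y \<le> x)"

definition po_length :: "'a::order set \<Rightarrow> nat" where
  "po_length X = Max {card C - 1 | C. po_chain X C}"

definition po_connected :: "'a::order set \<Rightarrow> bool" where
  "po_connected X \<longleftrightarrow> X \<noteq> {} \<and>
     (\<forall>x\<in>X. \<forall>y\<in>X. (x, y) \<in> ({(a, b). a \<in> X \<and> b \<in> X \<and> (a < b \<or> b < a)})\<^sup>*)"

definition po_Min :: "'a::order set \<Rightarrow> 'a set" where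
  "po_Min X = {x \<in> X. \<not> (\<exists>y\<in>X. y < x)}"

definition po_Max :: "'a::order set \<Rightarrow> 'a set" where
  "po_Max X = {x \<in> X. \<not> (\<exists>y\<in>X. x < y)}"

definition contains_weak_crown :: "'a::order set \<Rightarrow> bool" where
  "contains_weak_crown X \<longleftrightarrow> (\<exists>n::nat. \<exists>x y :: nat \<Rightarrow> 'a. n \<ge> 2 \<and>
     x ` {1..n} \<subseteq> X \<and> y ` {1..n} \<subseteq> X \<and>
     inj_on x {1..n} \<and> inj_on y {1..n} \<and> x ` {1..n} \<inter> y ` {1..n} = {} \<and>
     (\<forall>i\<in>{1..n}. x i < y i) \<and>
     (\<forall>i\<in>{1..n-1}. x (i + 1) < y i) \<and>
     x 1 < y n)"

definition po_B :: "'a::order set \<Rightarrow> ('a \<times> 'a) set" where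
  "po_B X = {(x, y). x \<in> X \<and> y \<in> X \<and> x < y}"

definition maximal_chains :: "'a::order set \<Rightarrow> 'a set set" where
  "maximal_chains X = {C. po_chain X C \<and> (\<forall>D. po_chain X D \<and> C \<subseteq> D \<longrightarrow> D = C)}"

text \<open>For C: u_1<...<u_m and D: v_1<...<v_m, the map u_i |-> v_i is the unique
order isomorphism f : C -> D, and u_i |-> v_(m-i+1) the unique order-reversing bijection.\<close>
definition increasing_on :: "'a::order set \<Rightarrow> ('a \<times> 'a \<Rightarrow> 'a \<times> 'a) \<Rightarrow> 'a set \<Rightarrow> bool" where
  "increasing_on X \<theta> C \<longleftrightarrow> (\<exists>D\<in>maximal_chains X. \<exists>f. bij_betw f C D \<and>
     (\<forall>u\<in>C. \<forall>v\<in>C. u < v \<longrightarrow> f u < f v) \<and>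
     (\<forall>u\<in>C. \<forall>v\<in>C. u < v \<longrightarrow> \<theta> (u, v) = (f u, f v)))"

definition decreasing_on :: "'a::order set \<Rightarrow> ('a \<times> 'a \<Rightarrow> 'a \<times> 'a) \<Rightarrow> 'a set \<Rightarrow> bool" where
  "decreasing_on X \<theta> C \<longleftrightarrow> (\<exists>D\<in>maximal_chains X. \<exists>g. bij_betw g C D \<and>
     (\<forall>u\<in>C. \<forall>v\<in>C. u < v \<longrightarrow> g v < g u) \<and>
     (\<forall>u\<in>C. \<forall>v\<in>C. u < v \<longrightarrow> \<theta> (u, v) = (g v, g u)))"

definition setM :: "'a::order set \<Rightarrow> ('a \<times> 'a \<Rightarrow> 'a \<times> 'a) set" where
  "setM X = {\<theta>. bij_betw \<theta> (po_B X) (po_B X) \<and>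
     (\<forall>C\<in>maximal_chains X. increasing_on X \<theta> C \<or> decreasing_on X \<theta> C)}"

definition po_covers :: "'a::order set \<Rightarrow> 'a \<Rightarrow> 'a \<Rightarrow> bool" where
  "po_covers X u v \<longleftrightarrow> u \<in> X \<and> v \<in> X \<and> v < u \<and> \<not> (\<exists>w\<in>X. v < w \<and> w < u)"

definition closed_walk :: "'a::order set \<Rightarrow> (nat \<Rightarrow> 'a) \<Rightarrow> nat \<Rightarrow> bool" where
  "closed_walk X u m \<longleftrightarrow> (\<forall>i\<le>m. u i \<in> X) \<and>
     (\<forall>i<m. po_covers X (u i) (u (Suc i)) \<or> po_covers X (u (Suc i)) (u i)) \<and> u 0 = u m"

definition s_plus where
  "s_plus X \<theta> u m z = card {i. i < m \<and> u i < u (Suc i) \<and>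
     (\<exists>w\<in>X. z < w \<and> \<theta> (z, w) = (u i, u (Suc i)))}"

definition s_minus where
  "s_minus X \<theta> u m z = card {i. i < m \<and> u (Suc i) < u i \<and>
     (\<exists>w\<in>X. z < w \<and> \<theta> (z, w) = (u (Suc i), u i))}"

definition t_plus where
  "t_plus X \<theta> u m z = card {i. i < m \<and> u i < u (Suc i) \<and>
     (\<exists>w\<in>X. w < z \<and> \<theta> (w, z) = (u i, u (Suc i)))}"

definition t_minus where
  "t_minus X \<theta> u m z = card {i. i < m \<and> u (Suc i) < u i \<and>
     (\<exists>w\<in>X. w < z \<and> \<theta> (w, z) = (u (Suc i), u i))}"

definition admissible :: "'a::order set \<Rightarrow> ('a \<times> 'a \<Rightarrow> 'a \<times> 'a) \<Rightarrow> bool" where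
  "admissible X \<theta> \<longleftrightarrow> (\<forall>u m. closed_walk X u m \<longrightarrow> (\<forall>z\<in>X.
     int (s_plus X \<theta> u m z) - int (s_minus X \<theta> u m z) =
     int (t_plus X \<theta> u m z) - int (t_minus X \<theta> u m z)))"

definition setAM :: "'a::order set \<Rightarrow> ('a \<times> 'a \<Rightarrow> 'a \<times> 'a) set" where
  "setAM X = {\<theta> \<in> setM X. admissible X \<theta>}"

definition setP :: "'a::order set \<Rightarrow> ('a \<times> 'a \<Rightarrow> 'a \<times> 'a) set" where
  "setP X = {\<theta>. bij_betw \<theta> (po_B X) (po_B X) \<and>
     ((\<exists>lam. bij_betw lam X X \<and> (\<forall>x\<in>X. \<forall>y\<in>X. x \<le> y \<longleftrightarrow> lam x \<le> lam y) \<and>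
          (\<forall>x\<in>X. \<forall>y\<in>X. x < y \<longrightarrow> \<theta> (x, y) = (lam x, lam y))) \<or>
      (\<exists>lam. bij_betw lam X X \<and> (\<forall>x\<in>X. \<forall>y\<in>X. x \<le> y \<longleftrightarrow> lam y \<le> lam x) \<and>
          (\<forall>x\<in>X. \<forall>y\<in>X. x < y \<longrightarrow> \<theta> (x, y) = (lam y, lam x))))}"

end

theory Submission
  imports Defs "HOL-Library.Transitive_Closure_Table" "HOL-Combinatorics.Transposition"
begin

(* In a poset of length one every maximal chain is a pair x < y, so every bijection of B is
   increasing on every maximal chain. Without a weak crown the comparability graph is a forest:
   a shortest path from x to y avoiding the edge {x, y} would alternate up and down and close up
   into a weak crown. Hence a closed walk crosses each edge equally often in both directions, both
   sides of the admissibility condition vanish, and AM(X) consists of all bijections of B.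
   If Min(X) = {m} (or Max(X) = {m}), then B = {(m, x)}, and a bijection of B is induced by the
   permutation of X - {m} it defines. Otherwise connectedness yields an N-shaped path
   x1 < y1 > x2 < y2, and the transposition of (x1, y1) and (x2, y1), which fixes (x2, y2),
   is not proper. *)

lemma card_Collect_less_Suc:
  "card {i. i < Suc m \<and> P i} = card {i. i < m \<and> P i} + of_bool (P m)"
proof -
  have "{i. i < Suc m \<and> P i} = (if P m then insert m else id) {i. i < m \<and> P i}"
    by (auto simp: less_Suc_eq)
  then show ?thesis by simp
qed

lemma card_exits_eq_card_entries:
  assumes "P 0 = P m"
  shows "card {i. i < m \<and> P i \<and> \<not> P (Suc i)} = card {i. i < m \<and> \<not> P i \<and> P (Suc i)}"
proof -
  have "int (card {i. i < m \<and> P i \<and> \<not> P (Suc i)}) - int (card {i. i < m \<and> \<not> P i \<and> P (Suc i)})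
        = of_bool (P 0) - of_bool (P m)"
    by (induction m) (auto simp: card_Collect_less_Suc)
  then show ?thesis using assms by simp
qed

lemma card_Collect_mem_eq_sum:
  fixes m :: nat
  assumes "finite E"
  shows "card {i. i < m \<and> f i \<in> E} = (\<Sum>e\<in>E. card {i. i < m \<and> f i = e})"
proof -
  have "{i. i < m \<and> f i \<in> E} = (\<Union>e\<in>E. {i. i < m \<and> f i = e})" by blast
  moreover have "finite {i. i < m \<and> f i = e}" for e
    by (rule finite_subset[of _ "{..<m}"]) auto
  ultimately show ?thesis using assms by (simp add: card_UN_disjoint disjoint_iff)
qed

lemma closed_walk_crosses_bridge_equally:
  assumes "sym G" and walk: "\<forall>i<m. (u i, u (Suc i)) \<in> G" and "u 0 = u m"
    and bridge: "(a, b) \<notin> (G - {(a, b), (b, a)})\<^sup>*"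
  shows "card {i. i < m \<and> (u i, u (Suc i)) = (a, b)} = card {i. i < m \<and> (u i, u (Suc i)) = (b, a)}"
proof -
  define A where "A = {x. (a, x) \<in> (G - {(a, b), (b, a)})\<^sup>*}"
  \<comment> \<open>The walk can leave A only along (a, b) and enter it only along (b, a).\<close>
  have "a \<in> A" "b \<notin> A" using bridge by (auto simp: A_def)
  have closed: "y \<in> A" if "x \<in> A" "(x, y) \<in> G" "(x, y) \<notin> {(a, b), (b, a)}" for x y
    using that by (auto simp: A_def intro: rtrancl_into_rtrancl)
  have crossing: "(u i \<in> A \<and> u (Suc i) \<notin> A) = ((u i, u (Suc i)) = (a, b))"
       "(u i \<notin> A \<and> u (Suc i) \<in> A) = ((u i, u (Suc i)) = (b, a))" if "i < m" for i
    using closed[of "u i" "u (Suc i)"] closed[of "u (Suc i)" "u i"] walk that \<open>sym G\<close>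
      \<open>a \<in> A\<close> \<open>b \<notin> A\<close> by (auto dest: symD)
  have "card {i. i < m \<and> u i \<in> A \<and> u (Suc i) \<notin> A} = card {i. i < m \<and> u i \<notin> A \<and> u (Suc i) \<in> A}"
    using \<open>u 0 = u m\<close> by (intro card_exits_eq_card_entries) simp
  moreover have "{i. i < m \<and> u i \<in> A \<and> u (Suc i) \<notin> A} = {i. i < m \<and> (u i, u (Suc i)) = (a, b)}"
    "{i. i < m \<and> u i \<notin> A \<and> u (Suc i) \<in> A} = {i. i < m \<and> (u i, u (Suc i)) = (b, a)}"
    using crossing by blast+
  ultimately show ?thesis by simp
qed

lemma rtrancl_imp_inj_path:
  assumes "(a, b) \<in> R\<^sup>*"
  obtains p n where "p 0 = a" "p n = b" "\<forall>i<n. (p i, p (Suc i)) \<in> R" "inj_on p {..n}"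
proof -
  have "(\<lambda>x y. (x, y) \<in> R)\<^sup>*\<^sup>* a b"
    using assms by (simp add: rtranclp_rtrancl_eq)
  then obtain xs where "rtrancl_path (\<lambda>x y. (x, y) \<in> R) a xs b"
    by (auto simp: rtranclp_eq_rtrancl_path)
  then obtain ys where ys: "rtrancl_path (\<lambda>x y. (x, y) \<in> R) a ys b" "distinct (a # ys)"
    by (rule rtrancl_path_distinct)
  have "(a # ys) ! 0 = a \<and> (a # ys) ! length ys = b \<and>
        (\<forall>i<length ys. ((a # ys) ! i, (a # ys) ! Suc i) \<in> R)"
    using ys(1)
  proof (induction rule: rtrancl_path.induct)
    case (step x y ys z)
    then show ?case by (auto simp: less_Suc_eq_0_disj)
  qed simp
  moreover have "inj_on (\<lambda>i. (a # ys) ! i) {..length ys}"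
    using ys(2) unfolding inj_on_def distinct_conv_nth by (metis atMost_iff length_Cons less_Suc_eq_le)
  ultimately show thesis using that by blast
qed

lemma bij_betw_fun_upd_fixed_point:
  assumes "bij_betw f (A - {a}) (A - {a})" "a \<in> A"
  shows "bij_betw (f(a := a)) A A"
proof -
  have "bij_betw (f(a := a)) (A - {a}) (A - {a})"
    using assms(1) by (subst bij_betw_cong[where g = f]) auto
  moreover have "bij_betw (f(a := a)) {a} {a}" by simp
  ultimately have "bij_betw (f(a := a)) ((A - {a}) \<union> {a}) ((A - {a}) \<union> {a})"
    by (rule bij_betw_combine) blast
  then show ?thesis using assms(2) by (simp add: insert_absorb)
qed

definition comparability :: "'a::order set \<Rightarrow> ('a \<times> 'a) set" where
  "comparability X = {(a, b). a \<in> X \<and> b \<in> X \<and> (a < b \<or> b < a)}"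

lemma sym_comparability: "sym (comparability X)"
  by (auto simp: comparability_def intro: symI)

lemma po_connected_iff:
  "po_connected X \<longleftrightarrow> X \<noteq> {} \<and> (\<forall>x\<in>X. \<forall>y\<in>X. (x, y) \<in> (comparability X)\<^sup>*)"
  by (simp add: po_connected_def comparability_def)

lemma closed_walk_in_comparability:
  assumes "closed_walk X u m" "i < m"
  shows "(u i, u (Suc i)) \<in> comparability X"
  using assms by (auto simp: closed_walk_def po_covers_def comparability_def)

lemma comparable_neighbour:
  assumes "po_connected X" "a \<in> X" "b \<in> X" "a \<noteq> b" "x \<in> X"
  shows "\<exists>y\<in>X. x < y \<or> y < x"
proof -
  obtain t where "t \<in> X" "t \<noteq> x" using assms(2-4) by blast
  then have "(x, t) \<in> (comparability X)\<^sup>*" "x \<noteq> t"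
    using assms(1,5) by (auto simp: po_connected_iff)
  then obtain y where "(x, y) \<in> comparability X" by (auto elim: converse_rtranclE)
  then show ?thesis by (auto simp: comparability_def)
qed

lemma po_Min_eq_if_least: "m \<in> X \<Longrightarrow> \<forall>x\<in>X. m \<le> x \<Longrightarrow> po_Min X = {m}"
  by (auto simp: po_Min_def antisym less_le_not_le)

lemma po_Max_eq_if_greatest: "m \<in> X \<Longrightarrow> \<forall>x\<in>X. x \<le> m \<Longrightarrow> po_Max X = {m}"
  by (auto simp: po_Max_def antisym less_le_not_le)

lemma finite_chain_lengths: "finite X \<Longrightarrow> finite {card C - 1 | C. po_chain X C}"
  by (rule finite_subset[of _ "{..card X}"])
    (auto simp: po_chain_def intro: card_mono le_trans[OF diff_le_self])

lemma po_length_attained: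
  assumes "finite X"
  obtains C where "po_chain X C" "card C - 1 = po_length X"
proof -
  have "po_chain X {}" by (simp add: po_chain_def)
  then have "po_length X \<in> {card C - 1 | C. po_chain X C}"
    unfolding po_length_def using finite_chain_lengths[OF assms] by (intro Max_in) auto
  then show thesis using that by auto
qed

lemma strict_pair_if_po_length_pos:
  assumes "finite X" "0 < po_length X"
  shows "\<exists>a\<in>X. \<exists>b\<in>X. a < b"
proof -
  obtain C where C: "po_chain X C" "1 < card C"
    using po_length_attained[OF assms(1)] assms(2) by (metis less_diff_conv add_0)
  moreover have "finite C" using C(2) by (simp add: card_ge_0_finite)
  ultimately obtain a b where "a \<in> C" "b \<in> C" "a \<noteq> b"
    using card_le_Suc0_iff_eq by (metis One_nat_def not_less)
  then show ?thesis using C(1) unfolding po_chain_def by (metis less_le subsetD)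
qed

lemma weak_crown_if_zigzag:
  fixes p :: "nat \<Rightarrow> 'a::order"
  assumes inj: "inj_on p {..2 * n - 1}" and "2 \<le> n" and X: "\<forall>i\<le>2 * n - 1. p i \<in> X"
    and up: "\<And>i. i < n \<Longrightarrow> p (2 * i) < p (2 * i + 1)"
    and down: "\<And>i. i + 1 < n \<Longrightarrow> p (2 * i + 2) < p (2 * i + 1)"
    and close: "p 0 < p (2 * n - 1)"
  shows "contains_weak_crown X"
proof -
  define ix iy where "ix i = 2 * (i - 1)" and "iy i = 2 * (i - 1) + 1" for i :: nat
  have ranges: "ix ` {1..n} \<subseteq> {..2 * n - 1}" "iy ` {1..n} \<subseteq> {..2 * n - 1}"
    "ix ` {1..n} \<inter> iy ` {1..n} = {}"
    by (auto simp: ix_def iy_def) presburger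
  have "inj_on ix {1..n}" "inj_on iy {1..n}" by (auto simp: inj_on_def ix_def iy_def)
  then have "inj_on (p \<circ> ix) {1..n}" "inj_on (p \<circ> iy) {1..n}"
    using ranges inj by (auto intro: comp_inj_on inj_on_subset)
  moreover have "(p \<circ> ix) ` {1..n} \<inter> (p \<circ> iy) ` {1..n} = {}"
    using inj_on_image_Int[OF inj ranges(1,2)] ranges(3) by (simp add: image_comp)
  moreover have "(p \<circ> ix) ` {1..n} \<subseteq> X" "(p \<circ> iy) ` {1..n} \<subseteq> X"
    using ranges X by auto
  moreover have "\<forall>i\<in>{1..n}. (p \<circ> ix) i < (p \<circ> iy) i"
    using up by (auto simp: ix_def iy_def)
  moreover have "\<forall>i\<in>{1..n - 1}. (p \<circ> ix) (i + 1) < (p \<circ> iy) i"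
  proof
    fix i assume "i \<in> {1..n - 1}"
    then have "2 * (i - 1) + 2 = 2 * i" "i - 1 + 1 < n" by auto
    then show "(p \<circ> ix) (i + 1) < (p \<circ> iy) i"
      using down[of "i - 1"] by (simp only: ix_def iy_def comp_apply) simp
  qed
  moreover have "(p \<circ> ix) 1 < (p \<circ> iy) n"
  proof -
    have "iy n = 2 * n - 1" using \<open>2 \<le> n\<close> by (simp add: iy_def)
    then show ?thesis using close by (simp add: ix_def)
  qed
  ultimately show ?thesis unfolding contains_weak_crown_def using \<open>2 \<le> n\<close> by blast
qed

definition contains_weak_N :: "'a::order set \<Rightarrow> bool" where
  "contains_weak_N X \<longleftrightarrow> (\<exists>x1\<in>X. \<exists>y1\<in>X. \<exists>x2\<in>X. \<exists>y2\<in>X.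
     x1 < y1 \<and> x2 < y1 \<and> x2 < y2 \<and> x1 \<noteq> x2 \<and> y1 \<noteq> y2)"

lemma transpose_not_proper:
  assumes "x1 \<in> X" "y1 \<in> X" "x2 \<in> X" "y2 \<in> X" "x1 < y1" "x2 < y1" "x2 < y2"
    and "x1 \<noteq> x2" "y1 \<noteq> y2"
  shows "transpose (x1, y1) (x2, y1) \<notin> setP X"
proof
  let ?\<theta> = "transpose (x1, y1) (x2, y1)"
  have fixed: "?\<theta> (x2, y2) = (x2, y2)" and swapped: "?\<theta> (x2, y1) = (x1, y1)"
    using assms(8,9) by simp_all
  assume "?\<theta> \<in> setP X"
  then have "(\<exists>lam. bij_betw lam X X \<and> (\<forall>x\<in>X. \<forall>y\<in>X. x \<le> y \<longleftrightarrow> lam x \<le> lam y) \<and>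
                 (\<forall>x\<in>X. \<forall>y\<in>X. x < y \<longrightarrow> ?\<theta> (x, y) = (lam x, lam y))) \<or>
             (\<exists>lam. bij_betw lam X X \<and> (\<forall>x\<in>X. \<forall>y\<in>X. x \<le> y \<longleftrightarrow> lam y \<le> lam x) \<and>
                 (\<forall>x\<in>X. \<forall>y\<in>X. x < y \<longrightarrow> ?\<theta> (x, y) = (lam y, lam x)))"
    unfolding setP_def mem_Collect_eq by (rule conjunct2)
  then show False
  proof (elim disjE exE conjE)
    fix lam assume "\<forall>x\<in>X. \<forall>y\<in>X. x < y \<longrightarrow> ?\<theta> (x, y) = (lam x, lam y)"
    then have "?\<theta> (x2, y1) = (lam x2, lam y1)" "?\<theta> (x2, y2) = (lam x2, lam y2)"
      using assms(2-4,6,7) by blast+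
    then show False using fixed swapped assms(8) by simp
  next
    fix lam assume "\<forall>x\<in>X. \<forall>y\<in>X. x < y \<longrightarrow> ?\<theta> (x, y) = (lam y, lam x)"
    then have "?\<theta> (x2, y1) = (lam y1, lam x2)" "?\<theta> (x2, y2) = (lam y2, lam x2)"
      using assms(2-4,6,7) by blast+
    then show False using fixed swapped assms(9) by simp
  qed
qed

lemma improper_bijection_if_weak_N:
  assumes "contains_weak_N X"
  obtains \<theta> where "bij_betw \<theta> (po_B X) (po_B X)" "\<theta> \<notin> setP X"
proof -
  obtain x1 y1 x2 y2 where N: "x1 \<in> X" "y1 \<in> X" "x2 \<in> X" "y2 \<in> X" "x1 < y1" "x2 < y1" "x2 < y2"
    "x1 \<noteq> x2" "y1 \<noteq> y2"
    using assms unfolding contains_weak_N_def by blast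
  then have "bij_betw (transpose (x1, y1) (x2, y1)) (po_B X) (po_B X)"
    by (simp add: po_B_def)
  then show thesis using that transpose_not_proper[OF N] by blast
qed

lemma s_plus_eq_card:
  assumes "z \<in> X" "\<theta> ` po_B X \<subseteq> po_B X"
  shows "s_plus X \<theta> u m z = card {i. i < m \<and> (u i, u (Suc i)) \<in> \<theta> ` {e \<in> po_B X. fst e = z}}"
  unfolding s_plus_def using assms
  by (intro arg_cong[where f = card] Collect_cong) (force simp: po_B_def)

lemma s_minus_eq_card:
  assumes "z \<in> X" "\<theta> ` po_B X \<subseteq> po_B X"
  shows "s_minus X \<theta> u m z = card {i. i < m \<and> (u (Suc i), u i) \<in> \<theta> ` {e \<in> po_B X. fst e = z}}"
  unfolding s_minus_def using assms
  by (intro arg_cong[where f = card] Collect_cong) (force simp: po_B_def)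

lemma t_plus_eq_card:
  assumes "z \<in> X" "\<theta> ` po_B X \<subseteq> po_B X"
  shows "t_plus X \<theta> u m z = card {i. i < m \<and> (u i, u (Suc i)) \<in> \<theta> ` {e \<in> po_B X. snd e = z}}"
  unfolding t_plus_def using assms
  by (intro arg_cong[where f = card] Collect_cong) (force simp: po_B_def)

lemma t_minus_eq_card:
  assumes "z \<in> X" "\<theta> ` po_B X \<subseteq> po_B X"
  shows "t_minus X \<theta> u m z = card {i. i < m \<and> (u (Suc i), u i) \<in> \<theta> ` {e \<in> po_B X. snd e = z}}"
  unfolding t_minus_def using assms
  by (intro arg_cong[where f = card] Collect_cong) (force simp: po_B_def)

locale length_le_one =
  fixes X :: "'a::order set"
  assumes no_three_chain: "\<lbrakk>a \<in> X; b \<in> X; c \<in> X; a < b; b < c\<rbrakk> \<Longrightarrow> False"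

lemma length_le_one_if_po_length:
  assumes "finite X" "po_length X \<le> 1"
  shows "length_le_one X"
proof
  fix a b c assume abc: "a \<in> X" "b \<in> X" "c \<in> X" "a < b" "b < c"
  moreover have "a \<noteq> b" "b \<noteq> c" "a \<noteq> c" using abc by auto
  ultimately have "po_chain X {a, b, c}" "card {a, b, c} = 3"
    by (auto simp: po_chain_def)
  then have "2 \<le> po_length X"
    unfolding po_length_def using finite_chain_lengths[OF assms(1)] by (force intro: Max_ge)
  then show False using assms(2) by simp
qed

context length_le_one
begin

lemma chain_eq_pair:
  assumes C: "po_chain X C" and "a \<in> C" "b \<in> C" "a < b"
  shows "C = {a, b}"
proof -
  have "c \<in> {a, b}" if "c \<in> C" for c
  proof -
    have "a \<in> X" "b \<in> X" "c \<in> X" "c \<le> a \<or> a \<le> c" "c \<le> b \<or> b \<le> c"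
      using C that assms(2,3) by (auto simp: po_chain_def)
    then show ?thesis
      using no_three_chain[of c a b] no_three_chain[of a c b] no_three_chain[of a b c] \<open>a < b\<close>
      by (auto simp: le_less)
  qed
  then show ?thesis using assms(2,3) by blast
qed

lemma pair_in_maximal_chains:
  assumes "a \<in> X" "b \<in> X" "a < b"
  shows "{a, b} \<in> maximal_chains X"
proof -
  have "po_chain X {a, b}" using assms by (auto simp: po_chain_def)
  moreover have "D = {a, b}" if "po_chain X D" "{a, b} \<subseteq> D" for D
    using chain_eq_pair[OF that(1), of a b] that(2) assms(3) by blast
  ultimately show ?thesis unfolding maximal_chains_def by blast
qed

lemma maximal_chain_is_pair:
  assumes "X \<noteq> {}" and neighbour: "\<And>x. x \<in> X \<Longrightarrow> \<exists>y\<in>X. x < y \<or> y < x"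
    and C: "C \<in> maximal_chains X"
  obtains a b where "C = {a, b}" "a \<in> X" "b \<in> X" "a < b"
proof -
  have chain: "po_chain X C" and maximal: "\<And>D. po_chain X D \<Longrightarrow> C \<subseteq> D \<Longrightarrow> D = C"
    using C by (auto simp: maximal_chains_def)
  have "\<exists>a\<in>C. \<exists>b\<in>C. a < b"
  proof (rule ccontr)
    assume no_pair: "\<not> ?thesis"
    obtain x where x: "x \<in> X" "C \<subseteq> {x}"
    proof (cases "C = {}")
      case False
      then obtain x where "x \<in> C" by blast
      have "y = x" if "y \<in> C" for y
        using chain \<open>x \<in> C\<close> that no_pair unfolding po_chain_def
        by (metis order.order_iff_strict)
      then show thesis
        using that chain \<open>x \<in> C\<close> unfolding po_chain_def by blast
    qed (use \<open>X \<noteq> {}\<close> that in blast)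
    obtain y where y: "y \<in> X" "x < y \<or> y < x" using neighbour x(1) by blast
    then have "po_chain X {x, y}" using x(1) by (auto simp: po_chain_def)
    then have "{x, y} = C" using maximal x(2) by blast
    then show False using no_pair y(2) by blast
  qed
  then obtain a b where ab: "a \<in> C" "b \<in> C" "a < b" by blast
  moreover have "C \<subseteq> X" using chain by (simp add: po_chain_def)
  ultimately show thesis using that[OF chain_eq_pair[OF chain ab]] by blast
qed

lemma increasing_on_pair:
  assumes "a \<in> X" "b \<in> X" "a < b" "\<theta> (a, b) \<in> po_B X"
  shows "increasing_on X \<theta> {a, b}"
proof -
  obtain a' b' where ab': "\<theta> (a, b) = (a', b')" "a' \<in> X" "b' \<in> X" "a' < b'"
    using assms(4) by (auto simp: po_B_def)
  define f where "f t = (if t = a then a' else b')" for t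
  have "bij_betw f {a, b} {a', b'}"
    using assms(3) ab'(4) by (auto simp: bij_betw_def f_def)
  moreover have "f a < f b" "\<theta> (a, b) = (f a, f b)"
    using assms(3) ab' by (auto simp: f_def)
  ultimately show ?thesis
    unfolding increasing_on_def using pair_in_maximal_chains[OF ab'(2-4)] assms(3)
    by (intro bexI[of _ "{a', b'}"] exI[of _ f]) (auto dest: less_asym)
qed

lemma setM_eq_bijections:
  assumes "X \<noteq> {}" "\<And>x. x \<in> X \<Longrightarrow> \<exists>y\<in>X. x < y \<or> y < x"
  shows "setM X = {\<theta>. bij_betw \<theta> (po_B X) (po_B X)}"
proof -
  have "increasing_on X \<theta> C"
    if bij: "bij_betw \<theta> (po_B X) (po_B X)" and C: "C \<in> maximal_chains X" for \<theta> C
  proof -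
    obtain a b where "C = {a, b}" "a \<in> X" "b \<in> X" "a < b"
      using maximal_chain_is_pair[OF assms C] .
    moreover have "\<theta> (a, b) \<in> po_B X"
      using calculation bij_betw_apply[OF bij] by (auto simp: po_B_def)
    ultimately show ?thesis using increasing_on_pair by simp
  qed
  then show ?thesis by (auto simp: setM_def)
qed

lemma comparability_path_alternates:
  assumes path: "\<forall>i<k. (p i, p (Suc i)) \<in> comparability X" and "p 0 < p 1" and "i < k"
  shows "p i < p (Suc i) \<longleftrightarrow> even i"
  using \<open>i < k\<close>
proof (induction i)
  case 0
  then show ?case using \<open>p 0 < p 1\<close> by simp
next
  case (Suc i)
  have IH: "p i < p (Suc i) \<longleftrightarrow> even i" using Suc by simp
  have "p i \<in> X" "p (Suc i) \<in> X" "p (Suc (Suc i)) \<in> X"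
    "p i < p (Suc i) \<or> p (Suc i) < p i"
    "p (Suc i) < p (Suc (Suc i)) \<or> p (Suc (Suc i)) < p (Suc i)"
    using path Suc.prems by (auto simp: comparability_def)
  then show ?case
    using IH no_three_chain[of "p i" "p (Suc i)" "p (Suc (Suc i))"]
      no_three_chain[of "p (Suc (Suc i))" "p (Suc i)" "p i"]
    by (cases "even i") auto
qed

lemma weak_crown_if_inj_path:
  assumes path: "\<forall>i<k. (p i, p (Suc i)) \<in> comparability X" and inj: "inj_on p {..k}"
    and "2 \<le> k" and up: "p 0 < p k"
  shows "contains_weak_crown X"
proof -
  have X: "p i \<in> X" if "i \<le> k" for i
    using path that \<open>2 \<le> k\<close> by (cases i) (auto simp: comparability_def)
  have down_if_not_up: "p (Suc i) < p i" if "i < k" "\<not> p i < p (Suc i)" for i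
    using path that by (auto simp: comparability_def)
  have "p 0 < p 1"
    using down_if_not_up[of 0] \<open>2 \<le> k\<close> up X[of 0] X[of 1] X[of k] no_three_chain[of "p 1" "p 0" "p k"]
    by auto
  then have alt: "p i < p (Suc i) \<longleftrightarrow> even i" if "i < k" for i
    using comparability_path_alternates[OF path _ that] by simp
  have "odd k"
  proof
    assume "even k"
    then have "p k < p (k - 1)"
      using alt[of "k - 1"] down_if_not_up[of "k - 1"] \<open>2 \<le> k\<close> by simp
    then show False using no_three_chain[of "p 0" "p k" "p (k - 1)"] up X by simp
  qed
  define n where "n = (k + 1) div 2"
  have k: "k = 2 * n - 1" "2 \<le> n" using \<open>odd k\<close> \<open>2 \<le> k\<close> unfolding n_def by presburger+
  show ?thesis
  proof (rule weak_crown_if_zigzag[OF _ k(2)])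
    show "inj_on p {..2 * n - 1}" "\<forall>i\<le>2 * n - 1. p i \<in> X" "p 0 < p (2 * n - 1)"
      using inj X up k(1) by auto
    show "p (2 * i) < p (2 * i + 1)" if "i < n" for i
      using alt[of "2 * i"] that k by simp
    show "p (2 * i + 2) < p (2 * i + 1)" if "i + 1 < n" for i
      using alt[of "2 * i + 1"] down_if_not_up[of "2 * i + 1"] that k by simp
  qed
qed

lemma comparability_edge_is_bridge:
  assumes "\<not> contains_weak_crown X" "a \<in> X" "b \<in> X" "a < b"
  shows "(a, b) \<notin> (comparability X - {(a, b), (b, a)})\<^sup>*"
proof
  assume "(a, b) \<in> (comparability X - {(a, b), (b, a)})\<^sup>*"
  then obtain p k where p: "p 0 = a" "p k = b" "inj_on p {..k}"
    and steps: "\<forall>i<k. (p i, p (Suc i)) \<in> comparability X - {(a, b), (b, a)}"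
    by (rule rtrancl_imp_inj_path)
  have "k \<noteq> 0" using p(1,2) \<open>a < b\<close> by (metis less_irrefl)
  moreover have "k \<noteq> 1" using steps p by auto
  ultimately have "contains_weak_crown X"
    using weak_crown_if_inj_path[of k p] steps p \<open>a < b\<close> by auto
  then show False using assms(1) by simp
qed

lemma closed_walk_balanced:
  assumes "finite X" "\<not> contains_weak_crown X" and walk: "closed_walk X u m"
    and "E \<subseteq> po_B X"
  shows "card {i. i < m \<and> (u i, u (Suc i)) \<in> E} = card {i. i < m \<and> (u (Suc i), u i) \<in> E}"
proof -
  have "E \<subseteq> X \<times> X" using assms(4) by (auto simp: po_B_def)
  then have "finite E" using assms(1) by (meson finite_SigmaI finite_subset)
  have "card {i. i < m \<and> (u i, u (Suc i)) = e} = card {i. i < m \<and> (u (Suc i), u i) = e}"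
    if e: "e \<in> E" for e
  proof -
    obtain a b where ab: "e = (a, b)" "a \<in> X" "b \<in> X" "a < b"
      using e assms(4) by (auto simp: po_B_def)
    have "card {i. i < m \<and> (u i, u (Suc i)) = (a, b)} = card {i. i < m \<and> (u i, u (Suc i)) = (b, a)}"
    proof (rule closed_walk_crosses_bridge_equally[OF sym_comparability])
      show "\<forall>i<m. (u i, u (Suc i)) \<in> comparability X"
        using walk closed_walk_in_comparability by blast
      show "u 0 = u m" using walk by (simp add: closed_walk_def)
      show "(a, b) \<notin> (comparability X - {(a, b), (b, a)})\<^sup>*"
        by (rule comparability_edge_is_bridge[OF assms(2) ab(2-4)])
    qed
    moreover have "{i. i < m \<and> (u (Suc i), u i) = (a, b)} = {i. i < m \<and> (u i, u (Suc i)) = (b, a)}"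
      by auto
    ultimately show ?thesis using ab(1) by simp
  qed
  then show ?thesis
    by (simp add: card_Collect_mem_eq_sum[OF \<open>finite E\<close>] cong: sum.cong)
qed

lemma admissible_if_no_weak_crown:
  assumes "finite X" "\<not> contains_weak_crown X" "\<theta> ` po_B X \<subseteq> po_B X"
  shows "admissible X \<theta>"
  unfolding admissible_def
proof (intro allI impI ballI)
  fix u m z assume walk: "closed_walk X u m" and "z \<in> X"
  have "\<theta> ` {e \<in> po_B X. fst e = z} \<subseteq> po_B X" "\<theta> ` {e \<in> po_B X. snd e = z} \<subseteq> po_B X"
    using assms(3) by auto
  then show "int (s_plus X \<theta> u m z) - int (s_minus X \<theta> u m z) =
             int (t_plus X \<theta> u m z) - int (t_minus X \<theta> u m z)"
    using closed_walk_balanced[OF assms(1,2) walk] \<open>z \<in> X\<close> assms(3)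
    by (simp add: s_plus_eq_card s_minus_eq_card t_plus_eq_card t_minus_eq_card)
qed

lemma setAM_eq_bijections:
  assumes "finite X" "\<not> contains_weak_crown X"
    and "X \<noteq> {}" "\<And>x. x \<in> X \<Longrightarrow> \<exists>y\<in>X. x < y \<or> y < x"
  shows "setAM X = {\<theta>. bij_betw \<theta> (po_B X) (po_B X)}"
  using admissible_if_no_weak_crown[OF assms(1,2)] setM_eq_bijections[OF assms(3,4)]
  by (auto simp: setAM_def bij_betw_def)

lemma least_if_po_Min_eq:
  assumes "po_Min X = {m}" "x \<in> X"
  shows "m \<le> x"
proof (cases "\<exists>y\<in>X. y < x")
  case True
  then obtain y where "y \<in> X" "y < x" by blast
  then have "y \<in> po_Min X"
    using no_three_chain[of _ y x] assms(2) by (auto simp: po_Min_def)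
  then show ?thesis using assms(1) \<open>y < x\<close> by simp
next
  case False
  then show ?thesis using assms by (auto simp: po_Min_def)
qed

lemma greatest_if_po_Max_eq:
  assumes "po_Max X = {m}" "x \<in> X"
  shows "x \<le> m"
proof (cases "\<exists>y\<in>X. x < y")
  case True
  then obtain y where "y \<in> X" "x < y" by blast
  then have "y \<in> po_Max X"
    using no_three_chain[of x y] assms(2) by (auto simp: po_Max_def)
  then show ?thesis using assms(1) \<open>x < y\<close> by simp
next
  case False
  then show ?thesis using assms by (auto simp: po_Max_def)
qed

lemma proper_if_least:
  assumes m: "m \<in> X" "\<forall>x\<in>X. m \<le> x" and \<theta>: "bij_betw \<theta> (po_B X) (po_B X)"
  shows "\<theta> \<in> setP X"
proof -
  have le: "x \<le> y \<longleftrightarrow> x = y \<or> x = m" if "x \<in> X" "y \<in> X" for x y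
    using m that no_three_chain[of m x y] by (auto simp: le_less)
  have B: "po_B X = Pair m ` (X - {m})"
    using le m(1) by (auto simp: po_B_def less_le)
  define lam where "lam = (snd \<circ> \<theta> \<circ> Pair m)(m := m)"
  have "bij_betw (Pair m) (X - {m}) (po_B X)" "bij_betw snd (po_B X) (X - {m})"
    unfolding B by (auto simp: bij_betw_def inj_on_def image_image)
  then have "bij_betw (snd \<circ> \<theta> \<circ> Pair m) (X - {m}) (X - {m})"
    using \<theta> by (blast intro: bij_betw_trans)
  then have lam: "bij_betw lam X X" and lam_other: "x \<in> X - {m} \<Longrightarrow> lam x \<in> X - {m}" for x
    using m(1) bij_betw_apply unfolding lam_def by (fastforce intro: bij_betw_fun_upd_fixed_point)+
  have "x \<le> y \<longleftrightarrow> lam x \<le> lam y" if "x \<in> X" "y \<in> X" for x y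
    using le[OF that] le[OF bij_betw_apply[OF lam that(1)] bij_betw_apply[OF lam that(2)]]
      bij_betw_imp_inj_on[OF lam] that lam_other[of x] lam_other[of y]
    by (auto simp: lam_def inj_on_def)
  moreover have "\<theta> (x, y) = (lam x, lam y)" if "x \<in> X" "y \<in> X" "x < y" for x y
  proof -
    have "(x, y) \<in> Pair m ` (X - {m})" "\<theta> (x, y) \<in> Pair m ` (X - {m})"
      using that bij_betw_apply[OF \<theta>, of "(x, y)"] unfolding B[symmetric] by (auto simp: po_B_def)
    then show ?thesis by (auto simp: lam_def)
  qed
  ultimately show ?thesis using \<theta> lam unfolding setP_def by blast
qed

lemma proper_if_greatest:
  assumes m: "m \<in> X" "\<forall>x\<in>X. x \<le> m" and \<theta>: "bij_betw \<theta> (po_B X) (po_B X)"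
  shows "\<theta> \<in> setP X"
proof -
  have le: "x \<le> y \<longleftrightarrow> x = y \<or> y = m" if "x \<in> X" "y \<in> X" for x y
    using m that no_three_chain[of x y m] by (auto simp: le_less)
  have B: "po_B X = (\<lambda>x. (x, m)) ` (X - {m})"
    using le m(1) by (auto simp: po_B_def less_le)
  define lam where "lam = (fst \<circ> \<theta> \<circ> (\<lambda>x. (x, m)))(m := m)"
  have "bij_betw (\<lambda>x. (x, m)) (X - {m}) (po_B X)" "bij_betw fst (po_B X) (X - {m})"
    unfolding B by (auto simp: bij_betw_def inj_on_def image_image)
  then have "bij_betw (fst \<circ> \<theta> \<circ> (\<lambda>x. (x, m))) (X - {m}) (X - {m})"
    using \<theta> by (blast intro: bij_betw_trans)
  then have lam: "bij_betw lam X X" and lam_other: "x \<in> X - {m} \<Longrightarrow> lam x \<in> X - {m}" for x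
    using m(1) bij_betw_apply unfolding lam_def by (fastforce intro: bij_betw_fun_upd_fixed_point)+
  have "x \<le> y \<longleftrightarrow> lam x \<le> lam y" if "x \<in> X" "y \<in> X" for x y
    using le[OF that] le[OF bij_betw_apply[OF lam that(1)] bij_betw_apply[OF lam that(2)]]
      bij_betw_imp_inj_on[OF lam] that lam_other[of x] lam_other[of y]
    by (auto simp: lam_def inj_on_def)
  moreover have "\<theta> (x, y) = (lam x, lam y)" if "x \<in> X" "y \<in> X" "x < y" for x y
  proof -
    have "(x, y) \<in> (\<lambda>x. (x, m)) ` (X - {m})" "\<theta> (x, y) \<in> (\<lambda>x. (x, m)) ` (X - {m})"
      using that bij_betw_apply[OF \<theta>, of "(x, y)"] unfolding B[symmetric] by (auto simp: po_B_def)
    then show ?thesis by (auto simp: lam_def)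
  qed
  ultimately show ?thesis using \<theta> lam unfolding setP_def by blast
qed

lemma least_if_unique_below:
  assumes "po_connected X" "\<not> contains_weak_N X" and ab: "a \<in> X" "b \<in> X" "a < b"
    and unique: "\<forall>c\<in>X. c < b \<longrightarrow> c = a" and "x \<in> X"
  shows "a \<le> x"
proof -
  have "(a, x) \<in> (comparability X)\<^sup>*" using assms(1) ab(1) \<open>x \<in> X\<close> by (simp add: po_connected_iff)
  then show ?thesis
  proof (induction rule: rtrancl_induct)
    case (step y z)
    have yz: "y \<in> X" "z \<in> X" "y < z \<or> z < y"
      using step.hyps(2) by (auto simp: comparability_def)
    show ?case
    proof (cases "y = a")
      case True
      then show ?thesis using yz no_three_chain[of z a b] ab by auto
    next
      case False
      then have "a < y" using step.IH by simp
      then have "z < y" using yz no_three_chain[of a y z] ab(1) by auto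
      show ?thesis
      proof (cases "z = a")
        case False
        then have "y \<noteq> b" using unique yz(2) \<open>z < y\<close> by blast
        then show ?thesis
          using assms(2) False yz ab \<open>a < y\<close> \<open>z < y\<close> unfolding contains_weak_N_def by blast
      qed simp
    qed
  qed simp
qed

lemma greatest_if_unique_above:
  assumes "po_connected X" "\<not> contains_weak_N X" and ab: "a \<in> X" "b \<in> X" "a < b"
    and unique: "\<forall>d\<in>X. a < d \<longrightarrow> d = b" and "x \<in> X"
  shows "x \<le> b"
proof -
  have "(x, b) \<in> (comparability X)\<^sup>*" using assms(1) ab(2) \<open>x \<in> X\<close> by (simp add: po_connected_iff)
  then show ?thesis
  proof (induction rule: converse_rtrancl_induct)
    case (step y z)
    have yz: "y \<in> X" "z \<in> X" "y < z \<or> z < y"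
      using step.hyps(1) by (auto simp: comparability_def)
    show ?case
    proof (cases "z = b")
      case True
      then show ?thesis using yz no_three_chain[of a b y] ab by auto
    next
      case False
      then have "z < b" using step.IH by simp
      then have "z < y" using yz no_three_chain[of y z b] ab(2) by auto
      show ?thesis
      proof (cases "y = b")
        case False
        then have "z \<noteq> a" using unique yz(1) \<open>z < y\<close> by blast
        then show ?thesis
          using assms(2) False yz ab \<open>z < b\<close> \<open>z < y\<close> unfolding contains_weak_N_def by blast
      qed simp
    qed
  qed simp
qed

lemma po_Min_or_po_Max_singleton:
  assumes "po_connected X" "\<not> contains_weak_N X" "a \<in> X" "b \<in> X" "a < b"
  shows "card (po_Min X) = 1 \<or> card (po_Max X) = 1"
proof -
  consider "\<forall>c\<in>X. c < b \<longrightarrow> c = a" | "\<forall>d\<in>X. a < d \<longrightarrow> d = b"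
    using assms(2-5) unfolding contains_weak_N_def by blast
  then show ?thesis
  proof cases
    case 1
    then have "po_Min X = {a}"
      using least_if_unique_below[OF assms] assms(3) by (simp add: po_Min_eq_if_least)
    then show ?thesis by simp
  next
    case 2
    then have "po_Max X = {b}"
      using greatest_if_unique_above[OF assms] assms(4) by (simp add: po_Max_eq_if_greatest)
    then show ?thesis by simp
  qed
qed

end

theorem corollary4p7:
  fixes X :: "'a::order set"
  assumes "finite X"
    and "po_connected X"
    and "po_length X = 1"
    and "\<not> contains_weak_crown X"
  shows "setAM X = setP X \<longleftrightarrow> card (po_Min X) = 1 \<or> card (po_Max X) = 1"
proof -
  interpret length_le_one X
    using assms(1,3) by (simp add: length_le_one_if_po_length)
  obtain a b where ab: "a \<in> X" "b \<in> X" "a < b"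
    using strict_pair_if_po_length_pos assms(1,3) by force
  have AM: "setAM X = {\<theta>. bij_betw \<theta> (po_B X) (po_B X)}"
    using setAM_eq_bijections assms(1,4) ab comparable_neighbour[OF assms(2) ab(1,2)] by blast
  show ?thesis
  proof
    assume "setAM X = setP X"
    then have "\<not> contains_weak_N X" using improper_bijection_if_weak_N AM by blast
    then show "card (po_Min X) = 1 \<or> card (po_Max X) = 1"
      using po_Min_or_po_Max_singleton assms(2) ab by blast
  next
    assume "card (po_Min X) = 1 \<or> card (po_Max X) = 1"
    then obtain m where "po_Min X = {m} \<or> po_Max X = {m}" by (metis card_1_singletonE)
    then have "m \<in> X \<and> (\<forall>x\<in>X. m \<le> x) \<or> m \<in> X \<and> (\<forall>x\<in>X. x \<le> m)"
      using least_if_po_Min_eq greatest_if_po_Max_eq by (auto simp: po_Min_def po_Max_def)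
    then have "setAM X \<subseteq> setP X" unfolding AM using proper_if_least proper_if_greatest by blast
    then show "setAM X = setP X" unfolding AM setP_def by blast
  qed
qed

end
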